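(* Let $s\ge 2$. There exists a constant $c>0$ (depending on $s$) such that $A(L,\mathbf 0)=O(2^{-cL})$ as $L\to\infty$; that is, $\|t\|_{U^s[2^L]}^{2^s}=O(2^{-cL})$.
   Context: Let $t(n)=(-1)^{s_2(n)}$ be the Thue-Morse sequence ($s_2$ = binary digit sum). Write $[M]=\{0,\dots,M-1\}$ and $\omega\cdot\mathbf h=\sum_{i=1}^s\omega_ih_i$. $A(L,\mathbf 0)=\mathbb{E}_{n,\mathbf h}\prod_{\omega\in\{0,1\}^s}t(n+\omega\cdot\mathbf h)$, the expectation over all $n\in\mathbb{Z}$, $\mathbf h\in\mathbb{Z}^s$ with $\{n+\omega\cdot\mathbf h:\omega\in\{0,1\}^s\}\subset[2^L]$; this equals $\|t\|_{U^s[2^L]}^{2^s}$, the $2^s$-th power of the Gowers $U^s$ norm of $t$ on $[2^L]$. *)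

theory Defs
  imports Main "HOL-Library.FuncSet" "HOL-Library.Landau_Symbols"
begin

fun binsum :: "nat \<Rightarrow> nat" where
  "binsum n = (if n = 0 then 0 else n mod 2 + binsum (n div 2))"

text \<open>Thue-Morse sequence t(n) = (-1)^(s_2 n); only evaluated on [2^L] below,
  negative arguments never occur.\<close>
definition thue_morse :: "int \<Rightarrow> real" where
  "thue_morse n = (-1) ^ binsum (nat n)"

text \<open>omega in {0,1}^s is represented by a subset w of {0..<s};
  omega . h = sum of h i over i in w. h in Z^s is a function in {0..<s} ->_E UNIV.\<close>
definition cube_configs :: "nat \<Rightarrow> nat \<Rightarrow> (int \<times> (nat \<Rightarrow> int)) set" where
  "cube_configs s L = {(n, h). h \<in> {0..<s} \<rightarrow>\<^sub>E (UNIV :: int set) \<and>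
      (\<forall>w \<in> Pow {0..<s}. n + (\<Sum>i\<in>w. h i) \<in> {0..<2 ^ L})}"

definition gowers_A :: "nat \<Rightarrow> nat \<Rightarrow> real" where
  "gowers_A s L = (\<Sum>(n, h)\<in>cube_configs s L.
       \<Prod>w\<in>Pow {0..<s}. thue_morse (n + (\<Sum>i\<in>w. h i))) / real (card (cube_configs s L))"

end

theory Submission
  imports Defs
begin

text \<open>The Thue--Morse sequence is multiplicative across binary digits: \<open>t(2^j a + b) = t(a) t(b)\<close>
  for \<open>0 \<le> b < 2^j\<close>. Splitting every vertex \<open>n + \<omega>\<cdot>h\<close> of a cube configuration in \<open>[2^(M+j)]\<close>
  into its \<open>j\<close> lowest binary digits and the rest writes the cube sum at scale \<open>M + j\<close> as a signed
  sum of \<open>2^((s+1)j)\<close> cube sums at scale \<open>M\<close>, one for each cube of low digits; the carries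
  become vertex-dependent shifts, which stay bounded. There is a cube of digits \<open>d\<close> with
  \<open>\<Prod>\<^sub>\<omega> t(\<omega>\<cdot>d) = -1\<close> (a product of Thue--Morse values over finitely many translates is never
  invariant under a common shift unless it equals 1), and after scaling by a suitable power of 2 this
  cube and the zero cube produce no carries and opposite signs, so their two terms cancel.
  Thus every \<open>j\<close> further binary digits gain a factor \<open>1 - 2^(1-(s+1)j)\<close> over the trivial bound,
  while the number of configurations is of order \<open>2^((s+1)L)\<close>.\<close>

declare binsum.simps [simp del]

lemma binsum_0 [simp]: "binsum 0 = 0"
  by (simp add: binsum.simps)

lemma binsum_rec: "binsum n = n mod 2 + binsum (n div 2)"
  by (cases "n = 0") (simp_all add: binsum.simps[of n])

lemma binsum_pow2_mult_add:
  "b < 2 ^ j \<Longrightarrow> binsum (2 ^ j * a + b) = binsum a + binsum b"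
proof (induction j arbitrary: b)
  case 0
  then show ?case by simp
next
  case (Suc j)
  have "(2 ^ Suc j * a + b) mod 2 = b mod 2" "(2 ^ Suc j * a + b) div 2 = 2 ^ j * a + b div 2"
    by (simp_all add: mult.assoc)
  moreover have "binsum (2 ^ j * a + b div 2) = binsum a + binsum (b div 2)"
    using Suc by (intro Suc.IH) auto
  ultimately show ?case
    using binsum_rec[of "2 ^ Suc j * a + b"] binsum_rec[of b] by simp
qed

lemma thue_morse_of_nat: "thue_morse (int n) = (-1) ^ binsum n"
  by (simp add: thue_morse_def)

lemma abs_thue_morse [simp]: "\<bar>thue_morse x\<bar> = 1"
  by (simp add: thue_morse_def)

lemma thue_morse_pow2_mult_add:
  assumes "0 \<le> a" "0 \<le> b" "b < 2 ^ j"
  shows "thue_morse (2 ^ j * a + b) = thue_morse a * thue_morse b"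
proof -
  obtain a' b' where ab: "a = int a'" "b = int b'"
    using assms(1,2) by (metis nonneg_eq_int)
  with assms(3) have "b' < 2 ^ j"
    by (metis of_nat_less_iff of_nat_numeral of_nat_power)
  then show ?thesis
    using thue_morse_of_nat[of "2 ^ j * a' + b'"]
    by (simp add: ab thue_morse_of_nat binsum_pow2_mult_add power_add)
qed

lemma thue_morse_0 [simp]: "thue_morse 0 = 1"
  by (simp add: thue_morse_def)

lemma thue_morse_1 [simp]: "thue_morse 1 = -1"
  using thue_morse_of_nat[of 1] by (simp add: binsum.simps[of "Suc 0"])

lemma thue_morse_add_pow2:
  "0 \<le> x \<Longrightarrow> x < 2 ^ j \<Longrightarrow> thue_morse (x + 2 ^ j) = - thue_morse x"
  using thue_morse_pow2_mult_add[of 1 x j] by (simp add: add.commute)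

lemma thue_morse_pow2 [simp]: "thue_morse (2 ^ j) = -1"
  using thue_morse_add_pow2[of 0 j] by (simp add: thue_morse_def)

lemma prod_thue_morse_add_pow2:
  assumes "\<And>i. i \<in> I \<Longrightarrow> 0 \<le> x i \<and> x i < 2 ^ p"
  shows "(\<Prod>i\<in>I. thue_morse (x i + 2 ^ p)) = (-1) ^ card I * (\<Prod>i\<in>I. thue_morse (x i))"
proof -
  have "(\<Prod>i\<in>I. thue_morse (x i + 2 ^ p)) = (\<Prod>i\<in>I. - thue_morse (x i))"
    using assms by (intro prod.cong) (auto simp: thue_morse_add_pow2)
  then show ?thesis by (simp add: prod_uminus)
qed

lemma int_less_two_pow_nat: "(x :: int) < 2 ^ nat x"
proof (cases "0 \<le> x")
  case True
  have "int (nat x) < int (2 ^ nat x)" using less_exp[of "nat x"] by linarith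
  then show ?thesis using True by simp
qed (simp add: less_le_trans[of x 0])

lemma thue_morse_prod_opposite_shifts:
  fixes y :: "'a \<Rightarrow> int"
  assumes "finite I" "I \<noteq> {}" "inj_on y I" "\<And>i. i \<in> I \<Longrightarrow> 0 \<le> y i"
  obtains z z' where "0 \<le> z" "0 \<le> z'"
    "(\<Prod>i\<in>I. thue_morse (y i + z')) = - (\<Prod>i\<in>I. thue_morse (y i + z))"
proof -
  define M where "M = Max (y ` I)"
  have "M \<in> y ` I"
    unfolding M_def using assms(1,2) by simp
  then obtain i0 where i0: "i0 \<in> I" "y i0 = M" by auto
  have below_M: "y i < M" if "i \<in> I" "i \<noteq> i0" for i
  proof -
    have "y i \<le> M" unfolding M_def using assms(1) that(1) by simp
    moreover have "y i \<noteq> y i0" using assms(3) i0(1) that by (meson inj_on_eq_iff)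
    ultimately show ?thesis using i0(2) by simp
  qed
  define p where "p = nat M"
  have M_less: "M < 2 ^ p" unfolding p_def by (rule int_less_two_pow_nat)
  show thesis
  proof (cases "even (card I)")
    case False
    have "(\<Prod>i\<in>I. thue_morse (y i + 2 ^ p)) = - (\<Prod>i\<in>I. thue_morse (y i + 0))"
    proof (subst prod_thue_morse_add_pow2)
      show "0 \<le> y i \<and> y i < 2 ^ p" if "i \<in> I" for i
        using that M_less below_M[of i] i0 assms(4) by (cases "i = i0") auto
    qed (use False in simp)
    then show thesis by (intro that[of 0 "2 ^ p"]) auto
  next
    case True
    \<comment> \<open>move the largest point to \<open>2^p\<close>; a further shift by \<open>2^p\<close> keeps its factor
      (\<open>t(2^p) = t(2^(p+1))\<close>) and flips the odd number of remaining ones\<close>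
    define z where "z = 2 ^ p - M"
    have top: "y i0 + z = 2 ^ p" "y i0 + (z + 2 ^ p) = 2 ^ Suc p"
      using i0 unfolding z_def by simp_all
    have rest: "0 \<le> y i + z \<and> y i + z < 2 ^ p" if "i \<in> I - {i0}" for i
      using that below_M M_less assms(4) unfolding z_def by auto
    have odd_rest: "odd (card (I - {i0}))"
    proof -
      have "card I \<noteq> 0" using assms(1,2) by simp
      then show ?thesis using True i0 assms(1) by (simp add: card_Diff_singleton)
    qed
    have "(\<Prod>i\<in>I. thue_morse (y i + (z + 2 ^ p)))
        = thue_morse (y i0 + (z + 2 ^ p)) * (\<Prod>i\<in>I - {i0}. thue_morse ((y i + z) + 2 ^ p))"
      using assms(1) i0 by (simp add: prod.remove add.assoc)
    also have "\<dots> = - (thue_morse (y i0 + z) * (\<Prod>i\<in>I - {i0}. thue_morse (y i + z)))"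
      using rest odd_rest by (simp only: top thue_morse_pow2 prod_thue_morse_add_pow2) simp
    also have "\<dots> = - (\<Prod>i\<in>I. thue_morse (y i + z))"
      using assms(1) i0 by (simp add: prod.remove)
    moreover have "0 \<le> z" using M_less unfolding z_def by simp
    ultimately show thesis by (intro that[of z "z + 2 ^ p"]) auto
  qed
qed

lemma abs_prod_thue_morse [simp]: "\<bar>\<Prod>i\<in>I. thue_morse (x i)\<bar> = 1"
  by (simp add: abs_prod)

lemma thue_morse_mult_self [simp]: "thue_morse x * thue_morse x = 1"
  by (simp add: thue_morse_def flip: power_add)

lemma thue_morse_prod_eq_1_if_shift_invariant:
  fixes y :: "'a \<Rightarrow> int"
  assumes "finite I" "\<And>i. i \<in> I \<Longrightarrow> 0 \<le> y i"
    and "\<And>z. 0 \<le> z \<Longrightarrow> (\<Prod>i\<in>I. thue_morse (y i + z)) = (\<Prod>i\<in>I. thue_morse (y i))"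
  shows "(\<Prod>i\<in>I. thue_morse (y i)) = 1"
  using assms
proof (induction "card I" arbitrary: I rule: less_induct)
  case less
  show ?case
  proof (cases "inj_on y I")
    case True
    show ?thesis
    proof (cases "I = {}")
      case False
      then obtain z z' where "0 \<le> z" "0 \<le> z'"
        "(\<Prod>i\<in>I. thue_morse (y i + z')) = - (\<Prod>i\<in>I. thue_morse (y i + z))"
        using thue_morse_prod_opposite_shifts[OF less.prems(1) _ True less.prems(2)] by blast
      then have "(\<Prod>i\<in>I. thue_morse (y i)) = - (\<Prod>i\<in>I. thue_morse (y i))"
        using less.prems(3) by simp
      then have "\<bar>\<Prod>i\<in>I. thue_morse (y i)\<bar> = 0" by simp
      then show ?thesis by simp
    qed simp
  next
    case False
    then obtain i j where ij: "i \<in> I" "j \<in> I" "i \<noteq> j" "y i = y j"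
      unfolding inj_on_def by blast
    define I' where "I' = I - {i} - {j}"
    have drop_pair: "(\<Prod>k\<in>I. thue_morse (y k + z)) = (\<Prod>k\<in>I'. thue_morse (y k + z))" for z
    proof -
      have "(\<Prod>k\<in>I. thue_morse (y k + z)) = thue_morse (y i + z) * (\<Prod>k\<in>I - {i}. thue_morse (y k + z))"
        using less.prems(1) ij by (simp add: prod.remove)
      also have "(\<Prod>k\<in>I - {i}. thue_morse (y k + z)) = thue_morse (y j + z) * (\<Prod>k\<in>I'. thue_morse (y k + z))"
        using less.prems(1) ij unfolding I'_def by (intro prod.remove) auto
      finally show ?thesis using ij(4) by (simp add: mult.assoc [symmetric])
    qed
    have "card I' < card I"
      using less.prems(1) ij card_gt_0_iff[of I] unfolding I'_def by (auto simp: card_Diff_singleton_if)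
    then have "(\<Prod>k\<in>I'. thue_morse (y k)) = 1"
      using less.hyps[of I'] less.prems drop_pair[of 0] drop_pair unfolding I'_def by auto
    then show ?thesis using drop_pair[of 0] by simp
  qed
qed

lemma prod_Pow_insert:
  assumes "finite A" "x \<notin> A"
  shows "(\<Prod>w\<in>Pow (insert x A). g w) = (\<Prod>w\<in>Pow A. g w) * (\<Prod>w\<in>Pow A. g (insert x w))"
proof -
  have "inj_on (insert x) (Pow A)"
    using assms(2) by (intro inj_onI) (metis PowD insert_ident subsetD)
  moreover have "Pow A \<inter> insert x ` Pow A = {}" using assms(2) by auto
  ultimately show ?thesis
    using assms(1) by (simp add: Pow_insert prod.union_disjoint prod.reindex)
qed

lemma thue_morse_cube_witness:
  "\<exists>m. (\<forall>i. 0 \<le> m i) \<and> (\<Prod>w\<in>Pow {0..<Suc s}. thue_morse (\<Sum>i\<in>w. m i)) = -1"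
proof (induction s)
  case 0
  have "Pow {0..<Suc 0} = {{}, {0}}" by (auto simp: Pow_def)
  then show ?case by (intro exI[of _ "\<lambda>_. 1"]) simp
next
  case (Suc s)
  then obtain m where m: "\<forall>i. 0 \<le> m i" "(\<Prod>w\<in>Pow {0..<Suc s}. thue_morse (\<Sum>i\<in>w. m i)) = -1"
    by blast
  have nonneg: "0 \<le> (\<Sum>i\<in>w. m i)" for w by (simp add: m(1) sum_nonneg)
  \<comment> \<open>the cube product is not shift invariant, so some shift turns it into 1\<close>
  obtain z where z: "0 \<le> z" "(\<Prod>w\<in>Pow {0..<Suc s}. thue_morse ((\<Sum>i\<in>w. m i) + z)) \<noteq> -1"
    using thue_morse_prod_eq_1_if_shift_invariant[of "Pow {0..<Suc s}" "\<lambda>w. \<Sum>i\<in>w. m i"] m(2) nonneg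
    by force
  then have z_one: "(\<Prod>w\<in>Pow {0..<Suc s}. thue_morse ((\<Sum>i\<in>w. m i) + z)) = 1"
    using abs_prod_thue_morse[of "\<lambda>w. (\<Sum>i\<in>w. m i) + z" "Pow {0..<Suc s}"]
    by (auto simp: abs_if split: if_splits)
  define m' where "m' = m(Suc s := z)"
  have old: "(\<Sum>i\<in>w. m' i) = (\<Sum>i\<in>w. m i)" if "w \<in> Pow {0..<Suc s}" for w
    using that unfolding m'_def by (intro sum.cong) auto
  have new: "(\<Sum>i\<in>insert (Suc s) w. m' i) = (\<Sum>i\<in>w. m i) + z" if "w \<in> Pow {0..<Suc s}" for w
  proof -
    have "finite w" "Suc s \<notin> w" using that finite_subset[of w "{0..<Suc s}"] by auto
    then show ?thesis using old[OF that] by (simp add: m'_def)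
  qed
  have "(\<Prod>w\<in>Pow {0..<Suc (Suc s)}. thue_morse (\<Sum>i\<in>w. m' i))
      = (\<Prod>w\<in>Pow {0..<Suc s}. thue_morse (\<Sum>i\<in>w. m' i))
        * (\<Prod>w\<in>Pow {0..<Suc s}. thue_morse (\<Sum>i\<in>insert (Suc s) w. m' i))"
    using prod_Pow_insert[of "{0..<Suc s}" "Suc s"] by (simp add: atLeast0_lessThan_Suc)
  also have "\<dots> = (\<Prod>w\<in>Pow {0..<Suc s}. thue_morse (\<Sum>i\<in>w. m i))
        * (\<Prod>w\<in>Pow {0..<Suc s}. thue_morse ((\<Sum>i\<in>w. m i) + z))"
    using old new by (intro arg_cong2[where f = "(*)"] prod.cong) auto
  also have "\<dots> = -1"
    using m(2) z_one by simp
  finally show ?case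
    using m(1) z(1) by (intro exI[of _ m']) (simp add: m'_def)
qed

text \<open>Cube configurations whose vertices \<open>\<omega>\<close> carry individual shifts \<open>r \<omega>\<close> (the paper's
  \<open>A(L, r)\<close> up to normalisation); \<^const>\<open>cube_configs\<close> is the case \<open>r = 0\<close>.\<close>

definition shifted_cube_configs :: "nat \<Rightarrow> nat \<Rightarrow> (nat set \<Rightarrow> int) \<Rightarrow> (int \<times> (nat \<Rightarrow> int)) set" where
  "shifted_cube_configs s M r = {(n, h). h \<in> {0..<s} \<rightarrow>\<^sub>E (UNIV :: int set) \<and>
      (\<forall>w \<in> Pow {0..<s}. n + (\<Sum>i\<in>w. h i) + r w \<in> {0..<2 ^ M})}"

definition shifted_cube_sum :: "nat \<Rightarrow> nat \<Rightarrow> (nat set \<Rightarrow> int) \<Rightarrow> real" where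
  "shifted_cube_sum s M r = (\<Sum>(n, h)\<in>shifted_cube_configs s M r.
       \<Prod>w\<in>Pow {0..<s}. thue_morse (n + (\<Sum>i\<in>w. h i) + r w))"

lemma cube_configs_eq_shifted: "cube_configs s L = shifted_cube_configs s L (\<lambda>_. 0)"
  by (simp add: cube_configs_def shifted_cube_configs_def)

lemma gowers_A_eq_shifted_cube_sum:
  "gowers_A s L = shifted_cube_sum s L (\<lambda>_. 0) / real (card (shifted_cube_configs s L (\<lambda>_. 0)))"
  by (simp add: gowers_A_def shifted_cube_sum_def cube_configs_eq_shifted)

lemma shifted_cube_sum_cong:
  assumes "\<And>w. w \<subseteq> {0..<s} \<Longrightarrow> r w = r' w"
  shows "shifted_cube_sum s M r = shifted_cube_sum s M r'"
proof -
  have "shifted_cube_configs s M r = shifted_cube_configs s M r'"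
    using assms by (auto simp: shifted_cube_configs_def)
  then show ?thesis
    unfolding shifted_cube_sum_def using assms by (intro sum.cong refl) (auto intro!: prod.cong)
qed

definition digit_box :: "nat \<Rightarrow> int \<Rightarrow> (int \<times> (nat \<Rightarrow> int)) set" where
  "digit_box s B = {0..<B} \<times> ({0..<s} \<rightarrow>\<^sub>E {0..<B})"

lemma finite_digit_box [simp]: "finite (digit_box s B)"
  by (simp add: digit_box_def finite_PiE)

lemma card_digit_box: "card (digit_box s B) = nat B ^ Suc s"
  by (simp add: digit_box_def card_cartesian_product card_PiE)

lemma shifted_cube_configs_corner_embedding:
  fixes s M :: nat and r :: "nat set \<Rightarrow> int"
  defines "corners \<equiv> \<lambda>(n, h). (n + r {}, \<lambda>i\<in>{0..<s}. n + h i + r {i})"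
  shows "inj_on corners (shifted_cube_configs s M r)"
    and "corners ` shifted_cube_configs s M r \<subseteq> digit_box s (2 ^ M)"
proof -
  show "inj_on corners (shifted_cube_configs s M r)"
  proof (rule inj_onI, clarify)
    fix n h n' h'
    assume "(n, h) \<in> shifted_cube_configs s M r" "(n', h') \<in> shifted_cube_configs s M r"
      and eq: "corners (n, h) = corners (n', h')"
    then have h: "h \<in> {0..<s} \<rightarrow>\<^sub>E UNIV" "h' \<in> {0..<s} \<rightarrow>\<^sub>E UNIV"
      by (auto simp: shifted_cube_configs_def)
    have "n = n'" "\<And>i. i < s \<Longrightarrow> h i = h' i"
      using eq by (auto simp: corners_def fun_eq_iff split: if_splits)
    moreover have "h = h'"
      using PiE_ext[OF h] calculation(2) by simp
    ultimately show "n = n' \<and> h = h'" by simp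
  qed
  show "corners ` shifted_cube_configs s M r \<subseteq> digit_box s (2 ^ M)"
  proof (rule image_subsetI)
    fix x assume x_in: "x \<in> shifted_cube_configs s M r"
    show "corners x \<in> digit_box s (2 ^ M)"
    proof (cases x)
      case (Pair n h)
      have range: "n + (\<Sum>i\<in>w. h i) + r w \<in> {0..<2 ^ M}" if "w \<subseteq> {0..<s}" for w
        using x_in that by (simp add: Pair shifted_cube_configs_def)
      have "n + r {} \<in> {0..<2 ^ M}" using range[of "{}"] by simp
      moreover have "n + h i + r {i} \<in> {0..<2 ^ M}" if "i < s" for i
        using range[of "{i}"] that by simp
      ultimately show ?thesis
        by (auto simp: Pair corners_def digit_box_def)
    qed
  qed
qed

lemma finite_shifted_cube_configs [simp]: "finite (shifted_cube_configs s M r)"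
proof -
  note embedding = shifted_cube_configs_corner_embedding[where s = s and M = M and r = r]
  show ?thesis
    by (rule finite_imageD[OF finite_subset[OF embedding(2) finite_digit_box] embedding(1)])
qed

lemma card_shifted_cube_configs_le: "card (shifted_cube_configs s M r) \<le> 2 ^ (Suc s * M)"
proof -
  note embedding = shifted_cube_configs_corner_embedding[where s = s and M = M and r = r]
  have "card (shifted_cube_configs s M r) \<le> card (digit_box s (2 ^ M))"
    using card_mono[OF finite_digit_box embedding(2)] by (simp add: card_image[OF embedding(1)])
  then show ?thesis
    by (simp add: card_digit_box nat_power_eq flip: power_mult) (simp add: mult.commute power_add)
qed

lemma abs_shifted_cube_sum_le_card: "\<bar>shifted_cube_sum s M r\<bar> \<le> card (shifted_cube_configs s M r)"
proof -
  have "\<bar>shifted_cube_sum s M r\<bar>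
      \<le> (\<Sum>(n, h)\<in>shifted_cube_configs s M r. \<bar>\<Prod>w\<in>Pow {0..<s}. thue_morse (n + (\<Sum>i\<in>w. h i) + r w)\<bar>)"
    unfolding shifted_cube_sum_def case_prod_beta by (rule sum_abs)
  then show ?thesis by (simp add: case_prod_beta)
qed

lemma abs_shifted_cube_sum_le: "\<bar>shifted_cube_sum s M r\<bar> \<le> 2 ^ (Suc s * M)"
proof -
  have "real (card (shifted_cube_configs s M r)) \<le> 2 ^ (Suc s * M)"
    using card_shifted_cube_configs_le[of s M r] by simp
  then show ?thesis using abs_shifted_cube_sum_le_card[of s M r] by linarith
qed

definition digit_sign :: "nat \<Rightarrow> int \<Rightarrow> (nat set \<Rightarrow> int) \<Rightarrow> int \<Rightarrow> (nat \<Rightarrow> int) \<Rightarrow> real" where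
  "digit_sign s B r c d = (\<Prod>w\<in>Pow {0..<s}. thue_morse ((c + (\<Sum>i\<in>w. d i) + r w) mod B))"

definition carry :: "int \<Rightarrow> (nat set \<Rightarrow> int) \<Rightarrow> int \<Rightarrow> (nat \<Rightarrow> int) \<Rightarrow> nat set \<Rightarrow> int" where
  "carry B r c d w = (c + (\<Sum>i\<in>w. d i) + r w) div B"

lemma abs_digit_sign [simp]: "\<bar>digit_sign s B r c d\<bar> = 1"
  by (simp add: digit_sign_def abs_prod)

lemma mult_add_mod_eq_carry:
  "B * n + c + (\<Sum>i\<in>w. B * h i + d i) + r w
     = B * (n + (\<Sum>i\<in>w. h i) + carry B r c d w) + (c + (\<Sum>i\<in>w. d i) + r w) mod B"
proof -
  have "B * n + c + (\<Sum>i\<in>w. B * h i + d i) + r w = B * (n + (\<Sum>i\<in>w. h i)) + (c + (\<Sum>i\<in>w. d i) + r w)"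
    by (simp add: sum.distrib sum_distrib_left algebra_simps)
  then show ?thesis
    unfolding carry_def by (metis (no_types) add.assoc distrib_left mult_div_mod_eq)
qed

lemma mult_add_in_range_iff:
  fixes B X b K :: int
  assumes "0 \<le> b" "b < B"
  shows "B * X + b \<in> {0..<B * K} \<longleftrightarrow> X \<in> {0..<K}"
proof
  assume "B * X + b \<in> {0..<B * K}"
  then have "0 \<le> B * X + b" "B * X + b < B * K" by simp_all
  then have "B * (-1) < B * X" "B * X < B * K" using assms by linarith+
  moreover have "0 < B" using assms by simp
  ultimately show "X \<in> {0..<K}" by (simp only: mult_less_cancel_left_pos) simp
next
  assume "X \<in> {0..<K}"
  then have "0 \<le> B * X" "B * (X + 1) \<le> B * K" using assms by (auto intro: mult_left_mono)
  then show "B * X + b \<in> {0..<B * K}" using assms by (simp add: algebra_simps)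
qed

definition digit_join :: "nat \<Rightarrow> int \<Rightarrow> (int \<times> (nat \<Rightarrow> int)) \<times> int \<times> (nat \<Rightarrow> int) \<Rightarrow> int \<times> (nat \<Rightarrow> int)" where
  "digit_join s B = (\<lambda>((c, d), (n, h)). (B * n + c, \<lambda>i\<in>{0..<s}. B * h i + d i))"

lemma digit_join_vertex:
  assumes "w \<subseteq> {0..<s}"
  shows "fst (digit_join s B ((c, d), (n, h))) + (\<Sum>i\<in>w. snd (digit_join s B ((c, d), (n, h))) i) + r w
     = B * (n + (\<Sum>i\<in>w. h i) + carry B r c d w) + (c + (\<Sum>i\<in>w. d i) + r w) mod B"
proof -
  have "(\<Sum>i\<in>w. restrict (\<lambda>i. B * h i + d i) {0..<s} i) = (\<Sum>i\<in>w. B * h i + d i)"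
    using assms by (intro sum.cong) auto
  then show ?thesis by (simp add: digit_join_def mult_add_mod_eq_carry)
qed

lemma digit_join_in_shifted_cube_configs_iff:
  fixes B :: int
  assumes B: "B = 2 ^ j" and cd: "(c, d) \<in> digit_box s B"
  shows "digit_join s B ((c, d), (n, h)) \<in> shifted_cube_configs s (M + j) r
     \<longleftrightarrow> (\<forall>w\<in>Pow {0..<s}. n + (\<Sum>i\<in>w. h i) + carry B r c d w \<in> {0..<2 ^ M})"
proof -
  have "B * (n + (\<Sum>i\<in>w. h i) + carry B r c d w) + (c + (\<Sum>i\<in>w. d i) + r w) mod B \<in> {0..<2 ^ (M + j)}
      \<longleftrightarrow> n + (\<Sum>i\<in>w. h i) + carry B r c d w \<in> {0..<2 ^ M}" for w
    using B by (subst mult_add_in_range_iff [symmetric, where B = B]) (auto simp: power_add mult.commute)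
  then show ?thesis
    using digit_join_vertex[of _ s B c d n h r]
    by (auto simp: shifted_cube_configs_def digit_join_def)
qed

lemma bij_betw_digit_join:
  fixes B :: int
  assumes B: "B = 2 ^ j"
  shows "bij_betw (digit_join s B)
    (SIGMA (c, d):digit_box s B. shifted_cube_configs s M (carry B r c d)) (shifted_cube_configs s (M + j) r)"
proof -
  have B_pos: "B > 0" using B by simp
  define S where "S = (SIGMA (c, d):digit_box s B. shifted_cube_configs s M (carry B r c d))"
  define split where "split = (\<lambda>(n, h). ((n mod B, \<lambda>i\<in>{0..<s}. h i mod B),
                                          (n div B, \<lambda>i\<in>{0..<s}. h i div B)))"
  have in_S_iff: "((c, d), (n, h)) \<in> S \<longleftrightarrow> (c, d) \<in> digit_box s B \<and> h \<in> {0..<s} \<rightarrow>\<^sub>E UNIV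
      \<and> digit_join s B ((c, d), (n, h)) \<in> shifted_cube_configs s (M + j) r" for c d n h
    using digit_join_in_shifted_cube_configs_iff[OF B, of c d s n h M r]
    by (auto simp: S_def shifted_cube_configs_def digit_join_def)
  have "bij_betw (digit_join s B) S (shifted_cube_configs s (M + j) r)"
  proof (rule bij_betw_byWitness[where f' = split])
    show "\<forall>x\<in>S. split (digit_join s B x) = x"
    proof clarify
      fix c d n h assume "((c, d), (n, h)) \<in> S"
      then have "0 \<le> c" "c < B" "d \<in> {0..<s} \<rightarrow>\<^sub>E {0..<B}" "h \<in> {0..<s} \<rightarrow>\<^sub>E UNIV"
        by (auto simp: in_S_iff digit_box_def)
      then show "split (digit_join s B ((c, d), (n, h))) = ((c, d), (n, h))"
        using B_pos by (auto simp: split_def digit_join_def fun_eq_iff PiE_def Pi_def extensional_def)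
    qed
    have join_split: "digit_join s B (split y) = y" if "y \<in> shifted_cube_configs s (M + j) r" for y
      using that
      by (auto simp: split_def digit_join_def shifted_cube_configs_def fun_eq_iff PiE_def extensional_def)
    then show "\<forall>y\<in>shifted_cube_configs s (M + j) r. digit_join s B (split y) = y" by blast
    show "digit_join s B ` S \<subseteq> shifted_cube_configs s (M + j) r"
      using in_S_iff by auto
    show "split ` shifted_cube_configs s (M + j) r \<subseteq> S"
    proof (rule image_subsetI)
      fix y assume y: "y \<in> shifted_cube_configs s (M + j) r"
      obtain n h where nh: "y = (n, h)" by fastforce
      from y show "split y \<in> S"
        using join_split[OF y] B_pos by (auto simp: nh split_def in_S_iff digit_box_def)
    qed
  qed
  then show ?thesis by (simp add: S_def)
qed

lemma shifted_cube_sum_digit_split: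
  fixes B :: int
  assumes B: "B = 2 ^ j"
  shows "shifted_cube_sum s (M + j) r
    = (\<Sum>(c, d)\<in>digit_box s B. digit_sign s B r c d * shifted_cube_sum s M (carry B r c d))"
proof -
  define S where "S = (SIGMA (c, d):digit_box s B. shifted_cube_configs s M (carry B r c d))"
  define F where "F = (\<lambda>(n, h). \<Prod>w\<in>Pow {0..<s}. thue_morse (n + (\<Sum>i\<in>w. h i) + r w))"
  have "shifted_cube_sum s (M + j) r = sum (F \<circ> digit_join s B) S"
    unfolding shifted_cube_sum_def F_def S_def
    by (subst sum.reindex_bij_betw [OF bij_betw_digit_join [OF B], symmetric]) (simp add: case_prod_beta)
  also have "\<dots> = (\<Sum>((c, d), (n, h))\<in>S. digit_sign s B r c d
                     * (\<Prod>w\<in>Pow {0..<s}. thue_morse (n + (\<Sum>i\<in>w. h i) + carry B r c d w)))"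
  proof (rule sum.cong [OF refl], clarsimp)
    fix c d n h assume "((c, d), (n, h)) \<in> S"
    then have high: "0 \<le> n + (\<Sum>i\<in>w. h i) + carry B r c d w" if "w \<subseteq> {0..<s}" for w
      using that by (auto simp: S_def shifted_cube_configs_def)
    have factor: "thue_morse (B * (n + (\<Sum>i\<in>w. h i) + carry B r c d w) + (c + (\<Sum>i\<in>w. d i) + r w) mod B)
        = thue_morse ((c + (\<Sum>i\<in>w. d i) + r w) mod B) * thue_morse (n + (\<Sum>i\<in>w. h i) + carry B r c d w)"
      if "w \<subseteq> {0..<s}" for w
      using thue_morse_pow2_mult_add[OF high[OF that], of "(c + (\<Sum>i\<in>w. d i) + r w) mod B" j] B
      by (simp add: mult.commute)
    have "F (digit_join s B ((c, d), (n, h)))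
        = (\<Prod>w\<in>Pow {0..<s}. thue_morse (B * (n + (\<Sum>i\<in>w. h i) + carry B r c d w) + (c + (\<Sum>i\<in>w. d i) + r w) mod B))"
      unfolding F_def case_prod_beta by (intro prod.cong refl) (simp add: digit_join_vertex)
    also have "\<dots> = digit_sign s B r c d * (\<Prod>w\<in>Pow {0..<s}. thue_morse (n + (\<Sum>i\<in>w. h i) + carry B r c d w))"
      unfolding digit_sign_def prod.distrib [symmetric] by (intro prod.cong refl) (simp add: factor)
    finally show "F (digit_join s B ((c, d), (n, h)))
        = digit_sign s B r c d * (\<Prod>w\<in>Pow {0..<s}. thue_morse (n + (\<Sum>i\<in>w. h i) + carry B r c d w))" .
  qed
  also have "\<dots> = (\<Sum>(c, d)\<in>digit_box s B. digit_sign s B r c d * shifted_cube_sum s M (carry B r c d))"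
    unfolding S_def shifted_cube_sum_def
    by (subst sum.Sigma [symmetric]) (auto simp: sum_distrib_left case_prod_beta intro!: sum.cong)
  finally show ?thesis .
qed

definition bounded_shifts :: "nat \<Rightarrow> (nat set \<Rightarrow> int) set" where
  "bounded_shifts s = {r. \<forall>w\<in>Pow {0..<s}. 0 \<le> r w \<and> r w \<le> int s + 1}"

lemma zero_in_bounded_shifts [simp]: "(\<lambda>_. 0) \<in> bounded_shifts s"
  by (simp add: bounded_shifts_def)

lemma carry_in_bounded_shifts:
  fixes B :: int
  assumes B: "B > 0" and r: "r \<in> bounded_shifts s" and cd: "(c, d) \<in> digit_box s B"
  shows "carry B r c d \<in> bounded_shifts s"
  unfolding bounded_shifts_def
proof (intro CollectI ballI conjI)
  fix w assume w: "w \<in> Pow {0..<s}"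
  have c: "0 \<le> c" "c \<le> B - 1" and d: "\<And>i. i \<in> w \<Longrightarrow> 0 \<le> d i \<and> d i \<le> B - 1"
    using cd w unfolding digit_box_def by (auto simp: PiE_def Pi_def)
  have r_w: "0 \<le> r w" "r w \<le> int s + 1" using r w unfolding bounded_shifts_def by auto
  have "card w \<le> s" using w card_mono[of "{0..<s}" w] by auto
  have "(\<Sum>i\<in>w. d i) \<le> int (card w) * (B - 1)"
    using d by (intro sum_bounded_above) auto
  also have "\<dots> \<le> int s * (B - 1)"
    using \<open>card w \<le> s\<close> B by (intro mult_right_mono) auto
  finally have "c + (\<Sum>i\<in>w. d i) + r w \<le> (int s + 1) * B"
    using c r_w by (simp add: algebra_simps)
  then have "carry B r c d w \<le> ((int s + 1) * B) div B"
    unfolding carry_def using B by (intro zdiv_mono1) auto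
  then show "carry B r c d w \<le> int s + 1" using B by simp
  have "0 \<le> (\<Sum>i\<in>w. d i)" using d by (intro sum_nonneg) auto
  then show "0 \<le> carry B r c d w"
    unfolding carry_def using B c r_w by (simp add: pos_imp_zdiv_nonneg_iff)
qed

lemma abs_sum_le_of_cancelling_pair:
  fixes f :: "'a \<Rightarrow> real"
  assumes "finite A" "a \<in> A" "b \<in> A" "a \<noteq> b" "f a + f b = 0" "\<And>x. x \<in> A \<Longrightarrow> \<bar>f x\<bar> \<le> X"
  shows "\<bar>sum f A\<bar> \<le> (real (card A) - 2) * X"
proof -
  have "sum f A = f a + sum f (A - {a})"
    using assms(1,2) by (simp add: sum.remove)
  also have "sum f (A - {a}) = f b + sum f (A - {a, b})"
  proof -
    have "A - {a, b} = A - {a} - {b}" by auto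
    then show ?thesis using assms(1-4) by (simp add: sum.remove)
  qed
  also have "f a + (f b + sum f (A - {a, b})) = sum f (A - {a, b})"
    using assms(5) by simp
  finally have "\<bar>sum f A\<bar> \<le> (\<Sum>x\<in>A - {a, b}. \<bar>f x\<bar>)" by simp
  also have "\<dots> \<le> real (card (A - {a, b})) * X"
    using sum_bounded_above[of "A - {a, b}" "\<lambda>x. \<bar>f x\<bar>" X] assms(6) by auto
  also have "real (card (A - {a, b})) = real (card A) - 2"
  proof -
    have "card {a, b} \<le> card A" using assms(1-3) by (intro card_mono) auto
    then show ?thesis using assms(1-4) by (simp add: card_Diff_subset of_nat_diff)
  qed
  finally show ?thesis .
qed

lemma cancelling_digit_cubes:
  fixes m :: "nat \<Rightarrow> int"
  assumes m_nonneg: "\<And>i. 0 \<le> m i"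
    and m_cube: "(\<Prod>w\<in>Pow {0..<s}. thue_morse (\<Sum>i\<in>w. m i)) = -1"
    and p: "int s + 1 < 2 ^ p" and q: "(\<Sum>i<s. m i) < 2 ^ q"
    and r: "r \<in> bounded_shifts s"
  defines "B \<equiv> 2 ^ (p + q)" and "d0 \<equiv> \<lambda>i\<in>{0..<s}. 0" and "d1 \<equiv> \<lambda>i\<in>{0..<s}. 2 ^ p * m i"
  shows "(0, d0) \<in> digit_box s B" and "(0, d1) \<in> digit_box s B"
    and "digit_sign s B r 0 d1 = - digit_sign s B r 0 d0"
    and "\<And>w. w \<subseteq> {0..<s} \<Longrightarrow> carry B r 0 d0 w = 0"
    and "\<And>w. w \<subseteq> {0..<s} \<Longrightarrow> carry B r 0 d1 w = 0"
proof -
  have B_pos: "0 < B" by (simp add: B_def)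
  have r_bound: "0 \<le> r w \<and> r w < 2 ^ p" if "w \<subseteq> {0..<s}" for w
  proof -
    have "0 \<le> r w \<and> r w \<le> int s + 1" using r that by (auto simp: bounded_shifts_def)
    then show ?thesis using p by linarith
  qed
  have low: "0 \<le> r w \<and> r w \<le> 2 ^ p * (\<Sum>i\<in>w. m i) + r w \<and> 2 ^ p * (\<Sum>i\<in>w. m i) + r w < B"
    if w: "w \<subseteq> {0..<s}" for w
  proof -
    have "0 \<le> (\<Sum>i\<in>w. m i)" by (simp add: sum_nonneg m_nonneg)
    moreover have "(\<Sum>i\<in>w. m i) \<le> (\<Sum>i<s. m i)"
      using w by (intro sum_mono2) (auto simp: m_nonneg)
    then have "2 ^ p * ((\<Sum>i\<in>w. m i) + 1) \<le> (2 ^ p * 2 ^ q :: int)"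
      using q by (intro mult_left_mono) auto
    ultimately show ?thesis
      using r_bound[OF w] by (simp add: B_def power_add algebra_simps)
  qed
  have sum_d: "(\<Sum>i\<in>w. d0 i) = 0" "(\<Sum>i\<in>w. d1 i) = 2 ^ p * (\<Sum>i\<in>w. m i)"
    if "w \<subseteq> {0..<s}" for w
    using that by (auto simp: d0_def d1_def sum_distrib_left intro!: sum.neutral sum.cong)
  show "carry B r 0 d0 w = 0" "carry B r 0 d1 w = 0" if "w \<subseteq> {0..<s}" for w
    using low[OF that] sum_d[OF that] by (auto simp: carry_def intro: div_pos_pos_trivial)
  have "2 ^ p * m i < B" if "i < s" for i
    using low[of "{i}"] that by simp
  then show "(0, d0) \<in> digit_box s B" "(0, d1) \<in> digit_box s B"
    using B_pos m_nonneg by (auto simp: digit_box_def d0_def d1_def)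
  have sign_d0: "digit_sign s B r 0 d0 = (\<Prod>w\<in>Pow {0..<s}. thue_morse (r w))"
  proof (unfold digit_sign_def, intro prod.cong refl)
    fix w assume "w \<in> Pow {0..<s}"
    then have "0 \<le> r w" "r w < B" "(\<Sum>i\<in>w. d0 i) = 0" using low[of w] sum_d[of w] by auto
    then show "thue_morse ((0 + (\<Sum>i\<in>w. d0 i) + r w) mod B) = thue_morse (r w)" by simp
  qed
  have "digit_sign s B r 0 d1 = (\<Prod>w\<in>Pow {0..<s}. thue_morse (\<Sum>i\<in>w. m i) * thue_morse (r w))"
  proof (unfold digit_sign_def, intro prod.cong refl)
    fix w assume "w \<in> Pow {0..<s}"
    then have "(0 + (\<Sum>i\<in>w. d1 i) + r w) mod B = 2 ^ p * (\<Sum>i\<in>w. m i) + r w"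
      and "0 \<le> r w" "r w < 2 ^ p"
      using low[of w] sum_d[of w] r_bound[of w] by auto
    then show "thue_morse ((0 + (\<Sum>i\<in>w. d1 i) + r w) mod B) = thue_morse (\<Sum>i\<in>w. m i) * thue_morse (r w)"
      by (simp add: thue_morse_pow2_mult_add sum_nonneg m_nonneg)
  qed
  then show "digit_sign s B r 0 d1 = - digit_sign s B r 0 d0"
    using m_cube sign_d0 by (simp add: prod.distrib)
qed

lemma abs_shifted_cube_sum_contract:
  fixes m :: "nat \<Rightarrow> int"
  assumes m_nonneg: "\<And>i. 0 \<le> m i"
    and m_cube: "(\<Prod>w\<in>Pow {0..<s}. thue_morse (\<Sum>i\<in>w. m i)) = -1"
    and p: "int s + 1 < 2 ^ p" and q: "(\<Sum>i<s. m i) < 2 ^ q"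
    and r: "r \<in> bounded_shifts s"
    and X: "\<And>r'. r' \<in> bounded_shifts s \<Longrightarrow> \<bar>shifted_cube_sum s M r'\<bar> \<le> X"
  shows "\<bar>shifted_cube_sum s (M + (p + q)) r\<bar> \<le> (2 ^ (Suc s * (p + q)) - 2) * X"
proof -
  define B :: int where "B = 2 ^ (p + q)"
  define f where "f = (\<lambda>(c, d). digit_sign s B r c d * shifted_cube_sum s M (carry B r c d))"
  define d0 :: "nat \<Rightarrow> int" where "d0 = (\<lambda>i\<in>{0..<s}. 0)"
  define d1 :: "nat \<Rightarrow> int" where "d1 = (\<lambda>i\<in>{0..<s}. 2 ^ p * m i)"
  note cancel = cancelling_digit_cubes[OF m_nonneg m_cube p q r, folded B_def d0_def d1_def]
  have "d0 \<noteq> d1"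
  proof
    assume "d0 = d1"
    then have "digit_sign s B r 0 d0 = 0" using cancel(3) by simp
    then show False using abs_digit_sign[of s B r 0 d0] by simp
  qed
  moreover have "f (0, d0) + f (0, d1) = 0"
    using cancel(3-5) shifted_cube_sum_cong[of s "carry B r 0 d0" "carry B r 0 d1" M]
    by (simp add: f_def)
  moreover have "\<bar>f (c, d)\<bar> \<le> X" if "(c, d) \<in> digit_box s B" for c d
    using carry_in_bounded_shifts[OF _ r that] X by (simp add: f_def abs_mult B_def)
  ultimately have "\<bar>sum f (digit_box s B)\<bar> \<le> (real (card (digit_box s B)) - 2) * X"
    using cancel(1,2) by (intro abs_sum_le_of_cancelling_pair) force+
  moreover have "real (card (digit_box s B)) = 2 ^ (Suc s * (p + q))"
    by (simp add: card_digit_box B_def nat_power_eq flip: power_mult) (simp only: power_add mult.commute)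
  ultimately show ?thesis
    using shifted_cube_sum_digit_split[OF B_def, of s M r] by (simp add: f_def)
qed

lemma abs_shifted_cube_sum_iterate:
  assumes contract: "\<And>M r X. r \<in> bounded_shifts s \<Longrightarrow>
      (\<And>r'. r' \<in> bounded_shifts s \<Longrightarrow> \<bar>shifted_cube_sum s M r'\<bar> \<le> X) \<Longrightarrow>
      \<bar>shifted_cube_sum s (M + j) r\<bar> \<le> (2 ^ (Suc s * j) - 2) * X"
  shows "r \<in> bounded_shifts s \<Longrightarrow>
    \<bar>shifted_cube_sum s (i + k * j) r\<bar> \<le> (2 ^ (Suc s * j) - 2) ^ k * 2 ^ (Suc s * i)"
proof (induction k arbitrary: r)
  case 0
  then show ?case using abs_shifted_cube_sum_le by simp
next
  case (Suc k)
  have "\<bar>shifted_cube_sum s ((i + k * j) + j) r\<bar>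
      \<le> (2 ^ (Suc s * j) - 2) * ((2 ^ (Suc s * j) - 2) ^ k * 2 ^ (Suc s * i))"
    by (rule contract[OF Suc.prems Suc.IH])
  moreover have "i + Suc k * j = (i + k * j) + j" by simp
  ultimately show ?case by (simp only: power_Suc mult.assoc)
qed

lemma shifted_cube_sum_exponential_decay:
  assumes "1 \<le> s"
  obtains j :: nat and \<rho> :: real where "0 < j" "0 < \<rho>" "\<rho> < 1"
    "\<And>L. \<bar>shifted_cube_sum s L (\<lambda>_. 0)\<bar> \<le> \<rho> ^ (L div j) * 2 ^ (Suc s * L)"
proof -
  obtain m where m: "\<forall>i. 0 \<le> m i" "(\<Prod>w\<in>Pow {0..<s}. thue_morse (\<Sum>i\<in>w. m i)) = -1"
    using thue_morse_cube_witness[of "s - 1"] assms by auto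
  define p where "p = nat (int s + 1)"
  define q where "q = nat (\<Sum>i<s. m i)"
  define j where "j = p + q"
  have p_large: "int s + 1 < 2 ^ p" and q_large: "(\<Sum>i<s. m i) < 2 ^ q"
    unfolding p_def q_def by (rule int_less_two_pow_nat)+
  define N :: real where "N = 2 ^ (Suc s * j)"
  have "(2::real) ^ 2 \<le> N"
    unfolding N_def using assms by (intro power_increasing) (auto simp: j_def p_def)
  then have N_ge: "4 \<le> N" by simp
  define \<rho> where "\<rho> = (N - 2) / N"
  show thesis
  proof (rule that[of j \<rho>])
    show "0 < j" "0 < \<rho>" "\<rho> < 1" using N_ge by (auto simp: j_def p_def \<rho>_def)
    fix L
    have "\<bar>shifted_cube_sum s (L mod j + (L div j) * j) (\<lambda>_. 0)\<bar> \<le> (N - 2) ^ (L div j) * 2 ^ (Suc s * (L mod j))"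
      unfolding N_def j_def
      by (rule abs_shifted_cube_sum_iterate[OF abs_shifted_cube_sum_contract[OF _ m(2) p_large q_large]])
        (use m(1) in auto)
    also have "\<dots> = \<rho> ^ (L div j) * 2 ^ (Suc s * L)"
    proof -
      have "N ^ (L div j) * 2 ^ (Suc s * (L mod j)) = (2::real) ^ (Suc s * L)"
        unfolding N_def
        by (metis (no_types) div_mult_mod_eq distrib_left mult.assoc mult.commute power_add power_mult)
      then show ?thesis
        using N_ge by (simp add: \<rho>_def power_divide field_simps)
    qed
    finally show "\<bar>shifted_cube_sum s L (\<lambda>_. 0)\<bar> \<le> \<rho> ^ (L div j) * 2 ^ (Suc s * L)"
      by simp
  qed
qed

lemma card_shifted_cube_configs_ge:
  fixes K :: nat
  assumes "(s + 1) * K \<le> 2 ^ L"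
  shows "K ^ Suc s \<le> card (shifted_cube_configs s L (\<lambda>_. 0))"
proof -
  have "digit_box s (int K) \<subseteq> shifted_cube_configs s L (\<lambda>_. 0)"
  proof clarify
    fix n h assume "(n, h) \<in> digit_box s (int K)"
    then have n: "0 \<le> n" "n \<le> int K - 1" and h: "h \<in> {0..<s} \<rightarrow>\<^sub>E {0..<int K}"
      by (auto simp: digit_box_def)
    have "n + (\<Sum>i\<in>w. h i) \<in> {0..<2 ^ L}" if w: "w \<subseteq> {0..<s}" for w
    proof -
      have h_w: "0 \<le> h i \<and> h i \<le> int K - 1" if "i \<in> w" for i
        using h w that by (auto simp: PiE_def Pi_def)
      have "card w \<le> s" using w card_mono[of "{0..<s}" w] by auto
      have "(\<Sum>i\<in>w. h i) \<le> int (card w) * (int K - 1)"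
        using h_w by (intro sum_bounded_above) auto
      also have "\<dots> \<le> int s * (int K - 1)"
        using \<open>card w \<le> s\<close> n by (intro mult_right_mono) auto
      finally have "n + (\<Sum>i\<in>w. h i) < (int s + 1) * int K"
        using n by (simp add: algebra_simps)
      also have "\<dots> \<le> 2 ^ L"
        using assms by (metis of_nat_add of_nat_le_iff of_nat_mult of_nat_numeral of_nat_power of_nat_1)
      finally have "n + (\<Sum>i\<in>w. h i) < 2 ^ L" .
      moreover have "0 \<le> (\<Sum>i\<in>w. h i)" using h_w by (intro sum_nonneg) auto
      ultimately show ?thesis using n by simp
    qed
    then show "(n, h) \<in> shifted_cube_configs s L (\<lambda>_. 0)"
      using h by (auto simp: shifted_cube_configs_def)
  qed
  then have "card (digit_box s (int K)) \<le> card (shifted_cube_configs s L (\<lambda>_. 0))"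
    by (rule card_mono [OF finite_shifted_cube_configs])
  then show ?thesis by (simp add: card_digit_box)
qed

lemma abs_gowers_A_le:
  assumes decay: "\<And>L. \<bar>shifted_cube_sum s L (\<lambda>_. 0)\<bar> \<le> \<rho> ^ (L div j) * 2 ^ (Suc s * L)"
    and L: "Suc s \<le> L"
  shows "\<bar>gowers_A s L\<bar> \<le> 2 ^ (Suc s * Suc s) * \<rho> ^ (L div j)"
proof -
  define C where "C = card (shifted_cube_configs s L (\<lambda>_. 0))"
  have "(s + 1) * 2 ^ (L - Suc s) \<le> 2 ^ Suc s * (2 ^ (L - Suc s) :: nat)"
    using less_exp[of "Suc s"] by (intro mult_right_mono) auto
  also have "\<dots> = 2 ^ L" using L by (metis le_add_diff_inverse power_add)
  finally have "(2 ^ (L - Suc s)) ^ Suc s \<le> C"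
    unfolding C_def by (rule card_shifted_cube_configs_ge)
  then have C_ge: "2 ^ (Suc s * (L - Suc s)) \<le> real C"
    by (metis of_nat_le_iff of_nat_numeral of_nat_power power_mult mult.commute)
  have "\<bar>gowers_A s L\<bar> \<le> \<rho> ^ (L div j) * 2 ^ (Suc s * L) / 2 ^ (Suc s * (L - Suc s))"
    unfolding gowers_A_eq_shifted_cube_sum C_def [symmetric] abs_divide
    using decay[of L] C_ge by (intro frac_le) auto
  also have "\<dots> = 2 ^ (Suc s * Suc s) * \<rho> ^ (L div j)"
  proof -
    have "Suc s * L = Suc s * Suc s + Suc s * (L - Suc s)"
      using L by (metis add_mult_distrib2 le_add_diff_inverse)
    then show ?thesis by (simp add: power_add)
  qed
  finally show ?thesis .
qed

lemma power_div_bigo_powr: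
  fixes \<rho> :: real
  assumes "0 < \<rho>" "\<rho> < 1" "0 < j"
  shows "(\<lambda>L. \<rho> ^ (L div j)) \<in> O(\<lambda>L. 2 powr (log 2 \<rho> / j * real L))"
proof (rule bigoI)
  show "\<forall>\<^sub>F L in sequentially. norm (\<rho> ^ (L div j)) \<le> 1 / \<rho> * norm (2 powr (log 2 \<rho> / j * real L))"
  proof (intro always_eventually allI)
    fix L
    have "L < L div j * j + j"
      using div_mult_mod_eq[of L j] mod_less_divisor[OF assms(3), of L] by linarith
    then have "real L < real (L div j * j + j)"
      by (simp only: of_nat_less_iff)
    then have "real L < (real (L div j) + 1) * real j"
      by (simp add: algebra_simps)
    then have "real L / j < real (L div j) + 1"
      using assms(3) by (simp add: divide_less_eq)
    then have "real L / j - 1 \<le> real (L div j)"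
      by linarith
    then have "\<rho> ^ (L div j) \<le> \<rho> powr (real L / j - 1)"
      using assms by (simp add: powr_realpow [symmetric] powr_mono')
    also have "\<dots> = 1 / \<rho> * \<rho> powr (real L / j)"
      using assms by (simp add: powr_diff)
    also have "\<rho> powr (real L / j) = (2 powr log 2 \<rho>) powr (real L / j)"
      using assms by simp
    also have "\<dots> = 2 powr (log 2 \<rho> / j * real L)"
      by (simp add: powr_powr)
    finally show "norm (\<rho> ^ (L div j)) \<le> 1 / \<rho> * norm (2 powr (log 2 \<rho> / j * real L))"
      using assms by simp
  qed
qed

theorem corollary2p4:
  fixes s :: nat
  assumes "s \<ge> 2"
  shows "\<exists>c>0. (\<lambda>L. gowers_A s L) \<in> O(\<lambda>L. 2 powr (- c * real L))"
proof -
  obtain j \<rho> where j: "0 < j" and \<rho>: "0 < \<rho>" "\<rho> < 1"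
    and decay: "\<And>L. \<bar>shifted_cube_sum s L (\<lambda>_. 0)\<bar> \<le> \<rho> ^ (L div j) * 2 ^ (Suc s * L)"
    using shifted_cube_sum_exponential_decay[of s] assms by auto
  have "(\<lambda>L. gowers_A s L) \<in> O(\<lambda>L. \<rho> ^ (L div j))"
  proof (rule bigoI)
    show "\<forall>\<^sub>F L in sequentially. norm (gowers_A s L) \<le> 2 ^ (Suc s * Suc s) * norm (\<rho> ^ (L div j))"
      using abs_gowers_A_le[OF decay] \<rho>(1)
      by (auto simp: eventually_at_top_linorder intro!: exI[of _ "Suc s"])
  qed
  also have "(\<lambda>L. \<rho> ^ (L div j)) \<in> O(\<lambda>L. 2 powr (- (- log 2 \<rho> / j) * real L))"
    using power_div_bigo_powr[OF \<rho> j] by simp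
  finally have "(\<lambda>L. gowers_A s L) \<in> O(\<lambda>L. 2 powr (- (- log 2 \<rho> / j) * real L))" .
  moreover have "log 2 \<rho> < 0" using \<rho> by simp
  then have "0 < - log 2 \<rho> / j"
    using j by (simp add: divide_neg_pos)
  ultimately show ?thesis by blast
qed

end
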